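(* For a sphere with four boundary components all labeled $2$ (so $\dim V=2$), the image of the pure mapping class group $P_{0,4}$ under the Fibonacci TQFT projective representation $\rho_{0,4}$ is dense in $PU(2)$.
   Context: The Fibonacci TQFT ($SO(3)$ Chern–Simons theory at $r=5$) assigns to each compact oriented surface $\Sigma$ with parametrized boundary components labeled by $\{0,2\}$ a finite-dimensional Hilbert space $V_\Sigma$ carrying a projective unitary action of the mapping class group of isotopy classes of orientation-, label- and parametrization-preserving homeomorphisms. $P_{g,n}$ denotes the pure mapping class group of a genus-$g$ surface with $n$ boundary components, and $\rho_{g,n}$ its projective representation on $V_\Sigma$ for $\Sigma$ of genus $g$ with $n$ boundary components labeled $2$ (components labeled $0$ may be capped off without changing the representation). In a suitable basis of the 2-dimensional space for $(g,n)=(0,4)$, a half-twist braid generator acts by $\mathrm{diag}(e^{4\pi i/5},-e^{2\pi i/5})$ and the fusion (change of basis) matrix is $\begin{pmatrix}\frac{\sqrt5-1}{2}&-\sqrt{\frac{\sqrt5-1}{2}}\\-\sqrt{\frac{\sqrt5-1}{2}}&\frac{\sqrt5-1}{2}\end{pmatrix}$. *)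

theory Defs
  imports "HOL-Analysis.Analysis"
begin

definition mat2 :: "complex \<Rightarrow> complex \<Rightarrow> complex \<Rightarrow> complex \<Rightarrow> complex^2^2" where
  "mat2 a b c d = (\<chi> i j. if i = 1 then (if j = 1 then a else b) else (if j = 1 then c else d))"

definition cadjoint :: "complex^2^2 \<Rightarrow> complex^2^2" where
  "cadjoint U = (\<chi> i j. cnj (U $ j $ i))"

definition unitary2 :: "(complex^2^2) set" where
  "unitary2 = {U. U ** cadjoint U = mat 1 \<and> cadjoint U ** U = mat 1}"

text \<open>Half-twist braid generator sigma_1 in the standard basis of V_{0,4}.\<close>
definition fib_sigma1 :: "complex^2^2" where
  "fib_sigma1 = mat2 (cis (4 * pi / 5)) 0 0 (- cis (2 * pi / 5))"

text \<open>Fusion (change of basis) matrix, with tau = (sqrt 5 - 1)/2.\<close>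
definition fib_tau :: real where "fib_tau = (sqrt 5 - 1) / 2"

definition fib_F :: "complex^2^2" where
  "fib_F = mat2 (of_real fib_tau) (- of_real (sqrt fib_tau))
               (- of_real (sqrt fib_tau)) (- of_real fib_tau)"

definition fib_sigma2 :: "complex^2^2" where
  "fib_sigma2 = fib_F ** fib_sigma1 ** matrix_inv fib_F"

text \<open>Images of the Dehn twists generating P_{0,4} (modulo the central boundary
  twists, which act by scalars): twists about the curves enclosing boundary
  components {1,2}, {2,3} and {1,3}.\<close>
definition rho04_generators :: "(complex^2^2) set" where
  "rho04_generators =
     { fib_sigma1 ** fib_sigma1,
       fib_sigma2 ** fib_sigma2,
       fib_sigma2 ** fib_sigma1 ** fib_sigma1 ** matrix_inv fib_sigma2 }"

inductive_set gen_group :: "(complex^2^2) set \<Rightarrow> (complex^2^2) set" for S where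
  gen_one: "mat 1 \<in> gen_group S"
| gen_mul: "g \<in> S \<Longrightarrow> h \<in> gen_group S \<Longrightarrow> g ** h \<in> gen_group S"
| gen_inv: "g \<in> S \<Longrightarrow> h \<in> gen_group S \<Longrightarrow> matrix_inv g ** h \<in> gen_group S"

text \<open>(Linear lift of) the image rho_{0,4}(P_{0,4}).\<close>
definition rho04_image :: "(complex^2^2) set" where
  "rho04_image = gen_group rho04_generators"

text \<open>Density in PU(2) = U(2)/U(1): the preimage of the image under the quotient
  map U(2) -> PU(2) (i.e. all unit-scalar multiples) is dense in U(2).\<close>
definition dense_in_PU2 :: "(complex^2^2) set \<Rightarrow> bool" where
  "dense_in_PU2 G \<longleftrightarrow> G \<subseteq> unitary2 \<and>
     unitary2 \<subseteq> closure {mat c ** g | c g. cmod c = 1 \<and> g \<in> G}"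

end

(* Modulo unit scalars, rho(sigma1^2) is a rotation about the first coordinate axis (SU(2)
   acting on R^3 by conjugation of pure quaternions), and h = rho(sigma1^2 sigma2^-2) lies in
   SU(2) with trace 2 - sqrt 5, i.e. it is a rotation through an angle a with
   2 cos a = 2 - sqrt 5.  This angle is an irrational multiple of pi: 2 cos (k a) = A + B sqrt 5
   with integers A, B, and the conjugate A - B sqrt 5, produced from 2 + sqrt 5 by the same
   Chebyshev recursion, exceeds 2 for k > 0.  Hence the closure of the image contains the
   one-parameter subgroup through h and its conjugate by rho(sigma1^2).  Their axes make an angle
   between 45 and 135 degrees, so conjugating one subgroup by the other produces a pair of
   orthogonal axes, and Euler angles for such a pair exhaust SU(2); the unit scalars then give
   all of U(2). *)

theory Submission
  imports Defs
begin

unbundle cross3_syntax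

section \<open>Complex 2x2 matrices and U(2)\<close>

lemma mat2_nth [simp]:
  "mat2 a b c d $ 1 $ 1 = a" "mat2 a b c d $ 1 $ 2 = b"
  "mat2 a b c d $ 2 $ 1 = c" "mat2 a b c d $ 2 $ 2 = d"
  by (simp_all add: mat2_def)

lemma mat2_eta: "A = mat2 (A$1$1) (A$1$2) (A$2$1) (A$2$2)"
  by (simp add: vec_eq_iff forall_2)

lemma mat2_cases: obtains a b c d where "A = mat2 a b c d"
  using mat2_eta by blast

lemma mat2_eq_iff: "mat2 a b c d = mat2 a' b' c' d' \<longleftrightarrow> a = a' \<and> b = b' \<and> c = c' \<and> d = d'"
  by (metis mat2_nth)

lemma mat2_mult [simp]:
  "mat2 a b c d ** mat2 a' b' c' d' = mat2 (a*a' + b*c') (a*b' + b*d') (c*a' + d*c') (c*b' +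
      d*d')"
  by (simp add: vec_eq_iff forall_2 matrix_matrix_mult_def sum_2)

lemma mat_eq_mat2: "mat x = mat2 x 0 0 x"
  by (subst mat2_eta) (simp add: mat_def)

lemma cadjoint_mat2 [simp]: "cadjoint (mat2 a b c d) = mat2 (cnj a) (cnj c) (cnj b) (cnj d)"
  by (subst mat2_eta) (simp add: cadjoint_def)

lemma det_mat2 [simp]: "det (mat2 a b c d) = a * d - b * c"
  by (simp add: det_2)

lemma cadjoint_mult: "cadjoint (A ** B) = cadjoint B ** cadjoint A"
  by (cases A rule: mat2_cases, cases B rule: mat2_cases) (simp add: mat2_eq_iff algebra_simps)

lemma cadjoint_mat: "cadjoint (mat a) = mat (cnj a)"
  by (simp add: mat_eq_mat2)

lemma cadjoint_cadjoint [simp]: "cadjoint (cadjoint A) = A"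
  by (cases A rule: mat2_cases) simp

lemma det_cadjoint: "det (cadjoint A) = cnj (det A)"
  by (cases A rule: mat2_cases) simp

lemma det_mat: "det (mat a :: complex^2^2) = a\<^sup>2"
  by (simp add: mat_eq_mat2 power2_eq_square)

lemma mat_mult_mat: "mat a ** mat b = (mat (a * b) :: complex^2^2)"
  by (simp add: mat_eq_mat2)

lemma mat_mult_scalar_mult: "mat a ** A ** (mat b ** B) = mat (a * b) ** (A ** B)"
  for A B :: "complex^2^2"
  by (cases A rule: mat2_cases, cases B rule: mat2_cases) (simp add: mat_eq_mat2 algebra_simps)

lemma matrix_inv_unique:
  fixes A B :: "'a::semiring_1^'n^'n"
  assumes "A ** B = mat 1" "B ** A = mat 1"
  shows "matrix_inv A = B"
proof -
  have inv: "A ** matrix_inv A = mat 1 \<and> matrix_inv A ** A = mat 1"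
    unfolding matrix_inv_def by (rule someI[of _ B]) (use assms in blast)
  have "matrix_inv A = matrix_inv A ** (A ** B)"
    using assms by simp
  also have "\<dots> = (matrix_inv A ** A) ** B"
    by (simp add: matrix_mul_assoc)
  finally show ?thesis
    using inv by simp
qed

lemma unitary2_mult: "U \<in> unitary2 \<Longrightarrow> V \<in> unitary2 \<Longrightarrow> U ** V \<in> unitary2"
  unfolding unitary2_def
  by (simp add: cadjoint_mult matrix_mul_assoc) (simp flip: matrix_mul_assoc)

lemma unit_mult_cnj: "cmod c = 1 \<Longrightarrow> c * cnj c = 1"
  using complex_norm_square[of c] by simp

lemma unitary2_mat: "cmod c = 1 \<Longrightarrow> mat c \<in> unitary2"
  by (simp add: unitary2_def cadjoint_mat mat_mult_mat unit_mult_cnj mult.commute[of "cnj c"])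

lemma unitary2_matrix_inv: "U \<in> unitary2 \<Longrightarrow> matrix_inv U = cadjoint U"
  by (rule matrix_inv_unique) (simp_all add: unitary2_def)

lemma unitary2_cadjoint: "U \<in> unitary2 \<Longrightarrow> cadjoint U \<in> unitary2"
  by (simp add: unitary2_def cadjoint_mult)

lemma cmod_det_unitary2:
  assumes "U \<in> unitary2"
  shows "cmod (det U) = 1"
proof -
  have "det (U ** cadjoint U) = 1"
    using assms by (simp add: unitary2_def mat_eq_mat2)
  then have "det U * cnj (det U) = 1"
    by (simp add: det_mul det_cadjoint)
  then have "(cmod (det U))\<^sup>2 = 1"
    by (metis complex_norm_square of_real_eq_1_iff)
  then show ?thesis
    using norm_ge_zero[of "det U"] by (auto simp: power2_eq_1_iff)
qed

lemma gen_group_mult: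
  assumes "g \<in> gen_group S" "h \<in> gen_group S"
  shows "g ** h \<in> gen_group S"
  using assms
  by (induction g rule: gen_group.induct) (auto simp flip: matrix_mul_assoc intro:
      gen_group.intros)

lemma gen_group_generator:
  assumes "g \<in> S"
  shows "g \<in> gen_group S" and "matrix_inv g \<in> gen_group S"
  using gen_mul[OF assms gen_one] gen_inv[OF assms gen_one] by simp_all

lemma gen_group_subset_unitary2:
  assumes "S \<subseteq> unitary2"
  shows "gen_group S \<subseteq> unitary2"
proof
  fix g assume "g \<in> gen_group S"
  then show "g \<in> unitary2"
  proof (induction g rule: gen_group.induct)
    case gen_one
    show ?case by (simp add: unitary2_mat)
  next
    case (gen_mul g h)
    then show ?case using assms by (blast intro: unitary2_mult)
  next
    case (gen_inv g h)
    then have "g \<in> unitary2" using assms by blast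
    then show ?case
      using gen_inv by (simp add: unitary2_matrix_inv unitary2_cadjoint unitary2_mult)
  qed
qed

section \<open>Unit quaternions and SU(2)\<close>

text \<open>The quaternion a + v$1 i + v$2 j + v$3 k as a complex 2x2 matrix; the unit quaternions are
  exactly SU(2).\<close>

definition qmat :: "real \<Rightarrow> real^3 \<Rightarrow> complex^2^2" where
  "qmat a v =
     mat2 (Complex a (v$1)) (Complex (- v$2) (v$3)) (Complex (v$2) (v$3)) (Complex a (- v$1))"

lemma qmat_eq_iff: "qmat a v = qmat b w \<longleftrightarrow> a = b \<and> v = w"
  unfolding qmat_def mat2_eq_iff by (auto simp: vec_eq_iff forall_3)

lemma qmat_mult: "qmat a v ** qmat b w = qmat (a*b - v \<bullet> w) (a *\<^sub>R w + b *\<^sub>R v - v \<times> w)"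
  by (simp add: qmat_def mat2_eq_iff complex_eq_iff cross_components inner_vec_def sum_3
      algebra_simps)

lemma qmat_one: "qmat 1 0 = mat 1"
  by (simp add: qmat_def mat_eq_mat2 mat2_eq_iff complex_eq_iff)

lemma qmat_conj:
  "qmat a v ** qmat b w ** qmat a (- v) =
     qmat (b * (a\<^sup>2 + v \<bullet> v)) ((a\<^sup>2 - v \<bullet> v) *\<^sub>R w + (2 * (v \<bullet> w)) *\<^sub>R v - (2 * a) *\<^sub>R (v \<times> w))"
  unfolding qmat_mult qmat_eq_iff
  by (simp add: vec_eq_iff forall_3 cross_components inner_vec_def sum_3 algebra_simps
      power2_eq_square)

definition su2_rot :: "real^3 \<Rightarrow> real \<Rightarrow> complex^2^2" where
  "su2_rot n t = qmat (cos t) (sin t *\<^sub>R n)"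

lemma su2_rot_zero: "su2_rot n 0 = mat 1"
  by (simp add: su2_rot_def qmat_one)

lemma su2_rot_add:
  assumes "n \<bullet> n = 1"
  shows "su2_rot n s ** su2_rot n t = su2_rot n (s + t)"
  using assms by (simp add: su2_rot_def qmat_mult qmat_eq_iff cos_add sin_add cross_mult_left
      cross_mult_right algebra_simps)

text \<open>Rodrigues' formula for the rotation of m through the angle -phi about the unit axis n;
  this orientation is the one matching qmat (see su2_rot_conj).\<close>

definition rodrigues :: "real^3 \<Rightarrow> real \<Rightarrow> real^3 \<Rightarrow> real^3" where
  "rodrigues n \<phi> m = cos \<phi> *\<^sub>R m + ((1 - cos \<phi>) * (n \<bullet> m)) *\<^sub>R n - sin \<phi> *\<^sub>R (n \<times> m)"

lemma su2_rot_conj: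
  assumes "n \<bullet> n = 1"
  shows "su2_rot n \<theta> ** su2_rot m t ** su2_rot n (- \<theta>) = su2_rot (rodrigues n (2 * \<theta>) m) t"
proof -
  have "su2_rot n (- \<theta>) = qmat (cos \<theta>) (- (sin \<theta> *\<^sub>R n))"
    by (simp add: su2_rot_def)
  then have "su2_rot n \<theta> ** su2_rot m t ** su2_rot n (- \<theta>) = qmat (cos t)
      (sin t *\<^sub>R (((cos \<theta>)\<^sup>2 - (sin \<theta>)\<^sup>2) *\<^sub>R m + (2 * (sin \<theta>)\<^sup>2 * (n \<bullet> m)) *\<^sub>R n
        - (2 * sin \<theta> * cos \<theta>) *\<^sub>R (n \<times> m)))"
    using assms
    by (simp add: su2_rot_def qmat_conj qmat_eq_iff cross_mult_left cross_mult_right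
        algebra_simps power2_eq_square flip: distrib_left)
  also have "\<dots> = su2_rot (rodrigues n (2 * \<theta>) m) t"
    by (simp add: su2_rot_def rodrigues_def cos_double sin_double cos_squared_eq)
  finally show ?thesis .
qed

lemma inner_rodrigues_self:
  assumes "n \<bullet> n = 1"
  shows "rodrigues n \<phi> m \<bullet> rodrigues n \<phi> m = m \<bullet> m"
proof -
  have cross: "(n \<times> m) \<bullet> (n \<times> m) = m \<bullet> m - (n \<bullet> m)\<^sup>2"
    using norm_cross_dot[of n m] assms by (simp add: power2_norm_eq_inner power_mult_distrib)
  have "rodrigues n \<phi> m \<bullet> rodrigues n \<phi> m
      = (cos \<phi>)\<^sup>2 * (m \<bullet> m) + (sin \<phi>)\<^sup>2 * ((n \<times> m) \<bullet> (n \<times> m)) + (1 - (cos \<phi>)\<^sup>2) * (n \<bullet> m)\<^sup>2"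
    using assms unfolding rodrigues_def
    by (simp add: inner_commute dot_cross_self algebra_simps power2_eq_square)
  also have "\<dots> = m \<bullet> m"
    unfolding cross sin_squared_eq by (simp add: algebra_simps)
  finally show ?thesis .
qed

lemma inner_rodrigues:
  assumes "n \<bullet> n = 1"
  shows "m \<bullet> rodrigues n \<phi> m = cos \<phi> * (m \<bullet> m) + (1 - cos \<phi>) * (n \<bullet> m)\<^sup>2"
  using assms by (simp add: rodrigues_def dot_cross_self inner_commute algebra_simps
      power2_eq_square)

lemma orthonormal_frame_expansion:
  assumes n: "n \<bullet> n = 1" and m: "m \<bullet> m = 1" and nm: "n \<bullet> m = 0"
  shows "v = (v \<bullet> n) *\<^sub>R n + (v \<bullet> m) *\<^sub>R m + (v \<bullet> (m \<times> n)) *\<^sub>R (m \<times> n)"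
proof -
  define w where "w = v - ((v \<bullet> n) *\<^sub>R n + (v \<bullet> m) *\<^sub>R m + (v \<bullet> (m \<times> n)) *\<^sub>R (m \<times> n))"
  have mn: "(m \<times> n) \<bullet> (m \<times> n) = 1"
    using norm_cross_dot[of m n] n m nm
    by (simp add: power_mult_distrib power2_norm_eq_inner inner_commute)
  have mn': "m \<bullet> n = 0" using nm by (simp add: inner_commute)
  have wn: "w \<bullet> n = 0" and wm: "w \<bullet> m = 0" and wmn: "w \<bullet> (m \<times> n) = 0"
    using n m nm mn' mn by (simp_all add: w_def inner_diff_left inner_diff_right inner_add_left
        inner_add_right dot_cross_self)
  have "w \<times> (m \<times> n) = 0"
    using Lagrange[of w m n] wn wm by simp
  then have "(m \<times> n) \<times> w = 0"
    by (subst cross_skew) simp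
  moreover have "m \<times> n \<noteq> 0" using mn by auto
  ultimately have "w = 0"
    using wmn cross_dot_cancel[of "m \<times> n" w 0] by (simp add: inner_commute)
  then show ?thesis by (simp add: w_def)
qed

lemma su2_rot_euler:
  assumes n: "n \<bullet> n = 1" and nm: "n \<bullet> m = 0"
  shows "su2_rot n a ** su2_rot m b ** su2_rot n c =
    qmat (cos b * cos (a + c)) ((cos b * sin (a + c)) *\<^sub>R n + (sin b * cos (a - c)) *\<^sub>R m
      + (sin b * sin (a - c)) *\<^sub>R (m \<times> n))"
proof -
  have "(m \<times> n) \<times> n = - m"
    using Lagrange[of n m n] n nm by (subst cross_skew) simp
  moreover have "su2_rot n a ** su2_rot m b =
      qmat (cos a * cos b)
        ((cos a * sin b) *\<^sub>R m + (cos b * sin a) *\<^sub>R n - (sin a * sin b) *\<^sub>R (n \<times> m))"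
    using nm by (simp add: su2_rot_def qmat_mult cross_mult_left cross_mult_right algebra_simps)
  ultimately show ?thesis
    using n nm cross_skew[of n m]
    by (simp add: inner_commute[of m n] su2_rot_def qmat_mult qmat_eq_iff cos_add sin_add
        cos_diff sin_diff cross_mult_left cross_mult_right Cross3.left_diff_distrib
        cross_add_left inner_diff_left inner_add_left dot_cross_self algebra_simps)
qed

lemma polar_coordinates:
  fixes x y :: real
  obtains p where "x = sqrt (x\<^sup>2 + y\<^sup>2) * cos p" "y = sqrt (x\<^sup>2 + y\<^sup>2) * sin p"
proof
  let ?z = "Complex x y"
  show "x = sqrt (x\<^sup>2 + y\<^sup>2) * cos (Arg ?z)" "y = sqrt (x\<^sup>2 + y\<^sup>2) * sin (Arg ?z)"
    using arg_cong[OF rcis_cmod_Arg[of ?z], of Re] arg_cong[OF rcis_cmod_Arg[of ?z], of Im]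
    by (simp_all add: complex_norm)
qed

lemma su2_rot_euler_surj:
  assumes n: "n \<bullet> n = 1" and m: "m \<bullet> m = 1" and nm: "n \<bullet> m = 0"
    and unit: "x0\<^sup>2 + v \<bullet> v = 1"
  obtains a b c where "su2_rot n a ** su2_rot m b ** su2_rot n c = qmat x0 v"
proof -
  define x1 x2 x3 where "x1 = v \<bullet> n" and "x2 = v \<bullet> m" and "x3 = v \<bullet> (m \<times> n)"
  have v: "v = x1 *\<^sub>R n + x2 *\<^sub>R m + x3 *\<^sub>R (m \<times> n)"
    unfolding x1_def x2_def x3_def by (rule orthonormal_frame_expansion[OF n m nm])
  have "v \<bullet> v = x1\<^sup>2 + x2\<^sup>2 + x3\<^sup>2"
    by (subst (2) v) (simp add: inner_add_right x1_def x2_def x3_def power2_eq_square)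
  then have "(sqrt (x0\<^sup>2 + x1\<^sup>2))\<^sup>2 + (sqrt (x2\<^sup>2 + x3\<^sup>2))\<^sup>2 = 1"
    using unit by simp
  then obtain b where b: "sqrt (x0\<^sup>2 + x1\<^sup>2) = cos b" "sqrt (x2\<^sup>2 + x3\<^sup>2) = sin b"
    using sincos_total_2pi by metis
  obtain p where p: "x0 = cos b * cos p" "x1 = cos b * sin p"
    using polar_coordinates[of x0 x1] unfolding b by metis
  obtain q where q: "x2 = sin b * cos q" "x3 = sin b * sin q"
    using polar_coordinates[of x2 x3] unfolding b by metis
  have "su2_rot n ((p + q) / 2) ** su2_rot m b ** su2_rot n ((p - q) / 2) = qmat x0 v"
    unfolding su2_rot_euler[OF n nm] v p q by (simp add: add_divide_distrib diff_divide_distrib)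
  then show ?thesis by (rule that)
qed

lemma su2_eq_qmat:
  assumes U: "U \<in> unitary2" and det: "det U = 1"
  obtains x0 v where "U = qmat x0 v" "x0\<^sup>2 + v \<bullet> v = 1"
proof -
  obtain p q r s where U_eq: "U = mat2 p q r s" by (rule mat2_cases)
  have inv: "U ** mat2 s (-q) (-r) p = mat 1"
    using det by (simp add: U_eq mat_eq_mat2 algebra_simps)
  have "cadjoint U = (cadjoint U ** U) ** mat2 s (-q) (-r) p"
    by (simp add: inv flip: matrix_mul_assoc)
  then have "cadjoint U = mat2 s (-q) (-r) p"
    using U by (simp add: unitary2_def)
  then have s: "s = cnj p" and q: "q = - cnj r"
    by (simp_all add: U_eq mat2_eq_iff)
  have "(cadjoint U ** U) $ 1 $ 1 = 1"
    using U by (simp add: unitary2_def mat_eq_mat2)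
  then have "Re (cnj p * p + cnj r * r) = 1"
    by (simp add: U_eq)
  then have "(Re p)\<^sup>2 + vector [Im p, Re r, Im r] \<bullet> (vector [Im p, Re r, Im r] :: real^3) = 1"
    by (simp add: inner_vec_def sum_3 power2_eq_square)
  moreover have "U = qmat (Re p) (vector [Im p, Re r, Im r])"
    by (simp add: U_eq s q qmat_def mat2_eq_iff complex_eq_iff)
  ultimately show ?thesis
    using that by blast
qed

lemma unitary2_eq_scalar_mult_su2:
  assumes U: "U \<in> unitary2"
  obtains c V where "cmod c = 1" "V \<in> unitary2" "det V = 1" "U = mat c ** V"
proof -
  define c where "c = csqrt (det U)"
  have c2: "c\<^sup>2 = det U" by (simp add: c_def)
  have c: "cmod c = 1"
    using cmod_det_unitary2[OF U] by (simp add: c_def)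
  then have c0: "c \<noteq> 0" by auto
  define V where "V = mat (inverse c) ** U"
  have "V \<in> unitary2"
    using c U by (simp add: V_def unitary2_mult unitary2_mat norm_inverse)
  moreover have "det V = 1"
    using c0 by (simp add: V_def det_mul det_mat power_inverse flip: c2)
  moreover have "U = mat c ** V"
    using c0 by (simp add: V_def mat_mult_mat matrix_mul_assoc)
  ultimately show ?thesis using c that by blast
qed

lemma unit_qmat_eq_su2_rot:
  assumes unit: "x0\<^sup>2 + v \<bullet> v = 1" and x0: "x0\<^sup>2 < 1"
  defines "n \<equiv> v /\<^sub>R sqrt (1 - x0\<^sup>2)"
  shows "n \<bullet> n = 1" and "qmat x0 v = su2_rot n (arccos x0)"
proof -
  have pos: "sqrt (1 - x0\<^sup>2) > 0" using x0 by simp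
  show "n \<bullet> n = 1"
    using unit pos by (simp add: n_def power2_eq_square[symmetric] field_simps)
  have "\<bar>x0\<bar> < 1"
    using x0 by (simp add: abs_square_less_1)
  then show "qmat x0 v = su2_rot n (arccos x0)"
    using pos by (simp add: su2_rot_def n_def sin_arccos abs_le_iff)
qed

lemma unit_qmat_mem_if_two_axes:
  fixes K :: "(complex^2^2) set"
  assumes mult: "\<And>x y. x \<in> K \<Longrightarrow> y \<in> K \<Longrightarrow> x ** y \<in> K"
    and n: "n \<bullet> n = 1" and m: "m \<bullet> m = 1" and angle: "(n \<bullet> m)\<^sup>2 \<le> 1/2"
    and Kn: "\<And>t. su2_rot n t \<in> K" and Km: "\<And>t. su2_rot m t \<in> K"
    and unit: "x0\<^sup>2 + v \<bullet> v = 1"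
  shows "qmat x0 v \<in> K"
proof -
  define d where "d = n \<bullet> m"
  have d: "d\<^sup>2 \<le> 1/2" using angle by (simp add: d_def)
  define \<phi> where "\<phi> = arccos (- (d\<^sup>2 / (1 - d\<^sup>2)))"
  have "d\<^sup>2 / (1 - d\<^sup>2) \<le> 1" "0 \<le> d\<^sup>2 / (1 - d\<^sup>2)"
    using d by (simp_all add: divide_le_eq)
  then have cos_\<phi>: "cos \<phi> = - (d\<^sup>2 / (1 - d\<^sup>2))"
    unfolding \<phi>_def by (intro cos_arccos) simp_all
  \<comment> \<open>rotating the axis m about n by \<phi> makes it orthogonal to m\<close>
  define p where "p = rodrigues n \<phi> m"
  have p: "p \<bullet> p = 1"
    using inner_rodrigues_self[OF n] m by (simp add: p_def)
  have "m \<bullet> p = cos \<phi> * (1 - d\<^sup>2) + d\<^sup>2"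
    using inner_rodrigues[OF n] m by (simp add: p_def d_def algebra_simps)
  then have mp: "m \<bullet> p = 0"
    using d by (simp add: cos_\<phi>)
  have Kp: "su2_rot p t \<in> K" for t
  proof -
    have "su2_rot n (\<phi> / 2) ** su2_rot m t ** su2_rot n (- (\<phi> / 2)) \<in> K"
      by (intro mult Kn Km)
    then show ?thesis
      using su2_rot_conj[OF n, of "\<phi> / 2" m t] by (simp add: p_def)
  qed
  obtain a b c where "su2_rot m a ** su2_rot p b ** su2_rot m c = qmat x0 v"
    using su2_rot_euler_surj[OF m p mp unit] .
  then show ?thesis
    using mult[OF mult[OF Km Kp] Km] by metis
qed

lemma unitary2_subset_if_su2_subset:
  fixes K :: "(complex^2^2) set"
  assumes mult: "\<And>x y. x \<in> K \<Longrightarrow> y \<in> K \<Longrightarrow> x ** y \<in> K"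
    and scalars: "\<And>c. cmod c = 1 \<Longrightarrow> mat c \<in> K"
    and su2: "\<And>x0 v. x0\<^sup>2 + v \<bullet> v = 1 \<Longrightarrow> qmat x0 v \<in> K"
  shows "unitary2 \<subseteq> K"
proof
  fix U assume "U \<in> unitary2"
  then obtain c V where "cmod c = 1" "V \<in> unitary2" "det V = 1" "U = mat c ** V"
    by (rule unitary2_eq_scalar_mult_su2)
  moreover obtain x0 v where "V = qmat x0 v" "x0\<^sup>2 + v \<bullet> v = 1"
    using su2_eq_qmat[OF \<open>V \<in> unitary2\<close> \<open>det V = 1\<close>] .
  ultimately show "U \<in> K"
    using mult[OF scalars su2] by simp
qed

section \<open>Closures and one-parameter subgroups\<close>

lemma tendsto_matrix_mult:
  fixes f :: "'a \<Rightarrow> 'b::real_normed_algebra_1^'n^'m" and g :: "'a \<Rightarrow> 'b^'p^'n"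
  assumes "(f \<longlongrightarrow> A) F" "(g \<longlongrightarrow> B) F"
  shows "((\<lambda>x. f x ** g x) \<longlongrightarrow> A ** B) F"
  unfolding matrix_matrix_mult_def
  by (intro tendsto_vec_lambda tendsto_sum tendsto_mult tendsto_vec_nth assms)

lemma closure_matrix_mult_closed:
  fixes S :: "('b::real_normed_algebra_1^'n^'n) set"
  assumes mult: "\<And>x y. x \<in> S \<Longrightarrow> y \<in> S \<Longrightarrow> x ** y \<in> S"
    and x: "x \<in> closure S" and y: "y \<in> closure S"
  shows "x ** y \<in> closure S"
proof -
  obtain xs where xs: "\<And>k. xs k \<in> S" "xs \<longlonglongrightarrow> x"
    using x unfolding closure_sequential by blast
  obtain ys where ys: "\<And>k. ys k \<in> S" "ys \<longlonglongrightarrow> y"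
    using y unfolding closure_sequential by blast
  have "(\<lambda>k. xs k ** ys k) \<longlonglongrightarrow> x ** y"
    using xs(2) ys(2) by (rule tendsto_matrix_mult)
  moreover have "xs k ** ys k \<in> S" for k
    using xs(1) ys(1) by (rule mult)
  ultimately show ?thesis
    unfolding closure_sequential by (intro exI[of _ "\<lambda>k. xs k ** ys k"]) simp
qed

lemma continuous_on_mat2 [continuous_intros]:
  assumes "continuous_on S a" "continuous_on S b" "continuous_on S c" "continuous_on S d"
  shows "continuous_on S (\<lambda>x. mat2 (a x) (b x) (c x) (d x))"
  unfolding mat2_def
proof (intro continuous_on_vec_lambda)
  fix i j :: 2
  show "continuous_on S
      (\<lambda>x. if i = 1 then if j = 1 then a x else b x else if j = 1 then c x else d x)"
    by (cases "i = 1"; cases "j = 1") (simp_all add: assms)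
qed

lemma continuous_on_su2_rot: "continuous_on S (su2_rot n)"
  unfolding su2_rot_def qmat_def by (intro continuous_intros)

lemma periodic_dense_orbit:
  fixes f :: "real \<Rightarrow> 'a::topological_space"
  assumes cont: "continuous_on UNIV f" and periodic: "\<And>x. f (x + 2 * pi) = f x"
    and K: "closed K" and orbit: "\<And>k::nat. k > 0 \<Longrightarrow> f (real k * a) \<in> K"
    and irrational: "a / (2 * pi) \<notin> \<rat>"
  shows "f t \<in> K"
proof -
  have periodic_int: "f (x + 2 * pi * of_int j) = f x" for x j
  proof (induction j arbitrary: x rule: int_induct[where k = 0])
    case (step1 i)
    then show ?case using periodic[of "x + 2 * pi * of_int i"] by (simp add: algebra_simps)
  next
    case (step2 i)
    then show ?case using periodic[of "x + 2 * pi * of_int (i - 1)"] by (simp add: algebra_simps)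
  qed simp
  define A where "A = {real k * a + 2 * pi * of_int j | k j. k > 0}"
  have "t \<in> closure A"
    unfolding closure_approachable
  proof (intro allI impI)
    fix e :: real assume "e > 0"
    then have "e / (2 * pi) > 0" by simp
    then obtain h k where
      hk: "k > 0" "\<bar>of_int k * (a / (2*pi)) - of_int h - t / (2*pi)\<bar> < e / (2*pi)"
      using sequence_of_fractional_parts_is_dense[OF irrational, of "e / (2 * pi)" "t / (2 * pi)"]
      by blast
    define y where "y = real (nat k) * a + 2 * pi * of_int (- h)"
    have "y \<in> A"
      unfolding A_def y_def using hk(1) by (intro CollectI exI[of _ "nat k"] exI[of _ "- h"]) simp
    have "y - t = 2 * pi * (of_int k * (a / (2*pi)) - of_int h - t / (2*pi))"
      using hk(1) by (simp add: y_def field_simps)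
    then have "dist y t = 2 * pi * \<bar>of_int k * (a / (2*pi)) - of_int h - t / (2*pi)\<bar>"
      by (simp add: dist_real_def abs_mult)
    also have "\<dots> < 2 * pi * (e / (2*pi))"
      using hk(2) by (intro mult_strict_left_mono) simp_all
    finally show "\<exists>y\<in>A. dist y t < e"
      using \<open>y \<in> A\<close> by auto
  qed
  moreover have "f ` closure A \<subseteq> K"
  proof (rule image_closure_subset[OF continuous_on_subset[OF cont] K])
    show "f ` A \<subseteq> K"
      unfolding A_def using orbit by (auto simp: periodic_int)
  qed simp
  ultimately show ?thesis by blast
qed

section \<open>An irrational angle\<close>

lemma int_square_eq_5_times_square:
  fixes x y :: int
  assumes "x\<^sup>2 = 5 * y\<^sup>2"
  shows "y = 0"
proof (rule ccontr)
  assume "y \<noteq> 0"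
  then have "x \<noteq> 0" using assms by auto
  have p: "prime_elem (5::int)" by simp
  have "multiplicity 5 (x\<^sup>2) = 2 * multiplicity 5 x"
    using \<open>x \<noteq> 0\<close> p by (simp add: prime_elem_multiplicity_power_distrib)
  moreover have "multiplicity 5 (5 * y\<^sup>2) = Suc (2 * multiplicity 5 y)"
    using \<open>y \<noteq> 0\<close> p by (simp add: prime_elem_multiplicity_mult_distrib
        prime_elem_multiplicity_power_distrib)
  ultimately have "2 * multiplicity 5 x = Suc (2 * multiplicity 5 y)"
    using assms by simp
  then show False by presburger
qed

lemma sqrt_5_coeffs_eq:
  fixes a b c :: int
  assumes "of_int a + of_int b * sqrt 5 = of_int c"
  shows "b = 0" "a = c"
proof -
  have "of_int b * sqrt 5 = (of_int (c - a) :: real)"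
    using assms by simp
  then have "(of_int b * sqrt 5)\<^sup>2 = (of_int (c - a) :: real)\<^sup>2"
    by simp
  then have "of_int ((c - a)\<^sup>2) = (of_int (5 * b\<^sup>2) :: real)"
    by (simp add: power_mult_distrib)
  then show "b = 0"
    by (intro int_square_eq_5_times_square) (simp only: of_int_eq_iff)
  then show "a = c"
    using assms by simp
qed

text \<open>chebyshev_seq x k = 2 T_k(x/2) for the Chebyshev polynomials T_k.\<close>

fun chebyshev_seq :: "real \<Rightarrow> nat \<Rightarrow> real" where
  "chebyshev_seq x 0 = 2"
| "chebyshev_seq x (Suc 0) = x"
| "chebyshev_seq x (Suc (Suc k)) = x * chebyshev_seq x (Suc k) - chebyshev_seq x k"

lemma chebyshev_seq_cos: "chebyshev_seq (2 * cos a) k = 2 * cos (real k * a)"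
proof (induction "2 * cos a" k rule: chebyshev_seq.induct)
  case (3 k)
  have "cos (real (Suc (Suc k)) * a) + cos (real k * a) = 2 * cos a * cos (real (Suc k) * a)"
    using cos_add[of "real (Suc k) * a" a] cos_diff[of "real (Suc k) * a" a]
    by (simp add: algebra_simps)
  then show ?case using 3 by (simp add: algebra_simps)
qed simp_all

lemma chebyshev_seq_sqrt_5_conj:
  "\<exists>a b :: int. chebyshev_seq (2 - sqrt 5) k = of_int a + of_int b * sqrt 5
     \<and> chebyshev_seq (2 + sqrt 5) k = of_int a - of_int b * sqrt 5"
proof (induction "2 - sqrt 5" k rule: chebyshev_seq.induct)
  case 1
  show ?case by (intro exI[of _ 2] exI[of _ 0]) simp
next
  case 2
  show ?case by (intro exI[of _ 2] exI[of _ "-1"]) simp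
next
  case (3 k)
  then obtain a b a' b' :: int where eqs:
    "chebyshev_seq (2 - sqrt 5) (Suc k) = of_int a + of_int b * sqrt 5"
    "chebyshev_seq (2 + sqrt 5) (Suc k) = of_int a - of_int b * sqrt 5"
    "chebyshev_seq (2 - sqrt 5) k = of_int a' + of_int b' * sqrt 5"
    "chebyshev_seq (2 + sqrt 5) k = of_int a' - of_int b' * sqrt 5"
    by blast
  show ?case
    unfolding chebyshev_seq.simps eqs
    by (intro exI[of _ "2 * a - 5 * b - a'"] exI[of _ "2 * b - a - b'"]) (simp add: algebra_simps)
qed

lemma chebyshev_seq_gt_2:
  assumes "x \<ge> 3"
  shows "2 < chebyshev_seq x (Suc k)"
proof -
  have "2 \<le> chebyshev_seq x k \<and> chebyshev_seq x k < chebyshev_seq x (Suc k)" for k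
  proof (induction k)
    case (Suc k)
    have "2 * chebyshev_seq x (Suc k) \<le> (x - 1) * chebyshev_seq x (Suc k)"
      using Suc assms by (intro mult_right_mono) simp_all
    then have "2 * chebyshev_seq x (Suc k) \<le> x * chebyshev_seq x (Suc k) - chebyshev_seq x (Suc
        k)"
      by (simp add: left_diff_distrib)
    then show ?case
      using Suc by (simp only: chebyshev_seq.simps) linarith
  qed (use assms in simp)
  then show ?thesis by (meson le_less_trans)
qed

lemma angle_not_rational_multiple_of_pi:
  assumes cos_a: "2 * cos a = 2 - sqrt 5"
  shows "a / (2 * pi) \<notin> \<rat>"
proof
  assume "a / (2 * pi) \<in> \<rat>"
  then obtain p q :: int where q: "q > 0" and pq: "a / (2 * pi) = of_int p / of_int q"
    by (rule Rats_cases')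
  then have "real (nat q) * a = 2 * pi * of_int p"
    by (simp add: field_simps)
  then have "chebyshev_seq (2 - sqrt 5) (nat q) = 2"
    using chebyshev_seq_cos[of a "nat q"] by (simp add: cos_a)
  moreover obtain k where k: "nat q = Suc k"
    using q by (metis gr0_implies_Suc zero_less_nat_eq)
  moreover obtain b c :: int where
    "chebyshev_seq (2 - sqrt 5) (Suc k) = of_int b + of_int c * sqrt 5"
    "chebyshev_seq (2 + sqrt 5) (Suc k) = of_int b - of_int c * sqrt 5"
    using chebyshev_seq_sqrt_5_conj by blast
  ultimately have "chebyshev_seq (2 + sqrt 5) (Suc k) = 2"
    using sqrt_5_coeffs_eq[of b c 2] by simp
  moreover have "(3::real) \<le> 2 + sqrt 5"
    by simp
  ultimately show False
    using chebyshev_seq_gt_2[of "2 + sqrt 5" k] by linarith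
qed

section \<open>A density criterion\<close>

lemma su2_rot_periodic: "su2_rot n (t + 2 * pi) = su2_rot n t"
  by (simp add: su2_rot_def)

lemma su2_rot_mult_mem:
  assumes n: "n \<bullet> n = 1" and one: "mat 1 \<in> G"
    and mult: "\<And>g h. g \<in> G \<Longrightarrow> h \<in> G \<Longrightarrow> g ** h \<in> G" and rot: "su2_rot n a \<in> G"
  shows "su2_rot n (real k * a) \<in> G"
proof (induction k)
  case 0
  show ?case using one by (simp add: su2_rot_zero)
next
  case (Suc k)
  have "su2_rot n (real (Suc k) * a) = su2_rot n a ** su2_rot n (real k * a)"
    by (simp add: su2_rot_add[OF n] algebra_simps)
  then show ?case using mult[OF rot Suc] by simp
qed

lemma dense_in_PU2_if_two_irrational_rotations:
  assumes unitary: "G \<subseteq> unitary2" and one: "mat 1 \<in> G"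
    and mult: "\<And>g h. g \<in> G \<Longrightarrow> h \<in> G \<Longrightarrow> g ** h \<in> G"
    and n: "n \<bullet> n = 1" and m: "m \<bullet> m = 1" and angle: "(n \<bullet> m)\<^sup>2 \<le> 1/2"
    and rot_n: "su2_rot n a \<in> G" and rot_m: "su2_rot m a \<in> G"
    and irrational: "a / (2 * pi) \<notin> \<rat>"
  shows "dense_in_PU2 G"
proof -
  define S where "S = {mat c ** g | c g. cmod c = 1 \<and> g \<in> G}"
  have G_S: "mat c ** g \<in> S" if "cmod c = 1" "g \<in> G" for c g
    using that unfolding S_def by blast
  have S_mult: "x ** y \<in> S" if x: "x \<in> S" and y: "y \<in> S" for x y
  proof -
    obtain c c' g g' where "x = mat c ** g" "y = mat c' ** g'" "cmod c = 1" "cmod c' = 1"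
      "g \<in> G" "g' \<in> G"
      using x y unfolding S_def by blast
    then show ?thesis
      using G_S[of "c * c'" "g ** g'"] mult by (simp add: mat_mult_scalar_mult norm_mult)
  qed
  define K where "K = closure S"
  have S_K: "S \<subseteq> K" unfolding K_def by (rule closure_subset)
  have K_mult: "\<And>x y. x \<in> K \<Longrightarrow> y \<in> K \<Longrightarrow> x ** y \<in> K"
    unfolding K_def using S_mult by (rule closure_matrix_mult_closed)
  have scalars: "mat c \<in> K" if "cmod c = 1" for c
    using G_S[OF that one] S_K by auto
  have G_K: "g \<in> K" if "g \<in> G" for g
    using G_S[of 1 g] that S_K by auto
  have one_param: "su2_rot u t \<in> K" if u: "u \<bullet> u = 1" and rot: "su2_rot u a \<in> G" for u t
  proof (rule periodic_dense_orbit[OF continuous_on_su2_rot su2_rot_periodic _ _ irrational])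
    show "closed K" by (simp add: K_def)
    show "su2_rot u (real k * a) \<in> K" for k
      using G_K[OF su2_rot_mult_mem[OF u one mult rot]] .
  qed
  have "unitary2 \<subseteq> K"
    using K_mult scalars
      unit_qmat_mem_if_two_axes[OF K_mult n m angle one_param[OF n rot_n] one_param[OF m rot_m]]
    by (rule unitary2_subset_if_su2_subset)
  then show ?thesis
    using unitary by (simp add: dense_in_PU2_def K_def S_def)
qed

section \<open>The Fibonacci representation of the four-punctured sphere\<close>

lemma cos_pi_div_5: "cos (pi / 5) = (1 + sqrt 5) / 4"
proof -
  define c where "c = cos (pi / 5)"
  have "cos (3 * (pi / 5)) = - cos (2 * (pi / 5))"
    using cos_pi_minus[of "2 * (pi / 5)"] by (simp add: field_simps)
  then have "4 * c ^ 3 - 3 * c = - (2 * c\<^sup>2 - 1)"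
    unfolding c_def cos_treble_cos cos_double_cos .
  then have "(c + 1) * (4 * c\<^sup>2 - 2 * c - 1) = 0"
    by (simp add: algebra_simps power2_eq_square power3_eq_cube)
  moreover have "c > 0"
    unfolding c_def by (rule cos_gt_zero) simp_all
  ultimately have "4 * c\<^sup>2 - 2 * c - 1 = 0"
    by simp
  moreover have "(4 * c - 1 - sqrt 5) * (4 * c - 1 + sqrt 5) = 4 * (4 * c\<^sup>2 - 2 * c - 1)"
    by (simp add: algebra_simps power2_eq_square)
  ultimately have "(4 * c - 1 - sqrt 5) * (4 * c - 1 + sqrt 5) = 0"
    by simp
  moreover have "4 * c - 1 + sqrt 5 > 0"
    using \<open>c > 0\<close> by (smt (verit) real_sqrt_ge_one one_le_numeral)
  ultimately have "4 * c - 1 - sqrt 5 = 0"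
    by (metis less_irrefl mult_eq_0_iff)
  then show ?thesis
    unfolding c_def by (simp add: field_simps)
qed

lemma cos_4pi_div_5: "cos (4 * pi / 5) = - ((1 + sqrt 5) / 4)"
  using cos_pi_minus[of "pi / 5"] by (simp add: cos_pi_div_5)

lemma fib_tau_pos: "fib_tau > 0"
  by (simp add: fib_tau_def)

lemma fib_tau_sq: "fib_tau\<^sup>2 = 1 - fib_tau"
  by (simp add: fib_tau_def power2_eq_square field_simps)

lemma fib_tau_sq_complex:
  "complex_of_real fib_tau * complex_of_real fib_tau = 1 - complex_of_real fib_tau"
  "complex_of_real (sqrt fib_tau) * complex_of_real (sqrt fib_tau) = complex_of_real fib_tau"
  using fib_tau_sq fib_tau_pos by (simp_all flip: of_real_mult add: power2_eq_square)

lemma fib_F_mult_self: "fib_F ** fib_F = mat 1"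
  by (simp add: fib_F_def mat_eq_mat2 mat2_eq_iff fib_tau_sq_complex)

lemma matrix_inv_fib_F: "matrix_inv fib_F = fib_F"
  by (rule matrix_inv_unique[OF fib_F_mult_self fib_F_mult_self])

lemma cadjoint_fib_F: "cadjoint fib_F = fib_F"
  by (simp add: fib_F_def)

lemma fib_F_unitary: "fib_F \<in> unitary2"
  by (simp add: unitary2_def cadjoint_fib_F fib_F_mult_self)

lemma det_fib_F: "det fib_F = -1"
  by (simp add: fib_F_def fib_tau_sq_complex)

lemma fib_sigma1_unitary: "fib_sigma1 \<in> unitary2"
  by (simp add: unitary2_def fib_sigma1_def mat_eq_mat2 cis_cnj cis_mult)

lemma fib_sigma2_eq: "fib_sigma2 = fib_F ** fib_sigma1 ** fib_F"
  by (simp add: fib_sigma2_def matrix_inv_fib_F)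

lemma rho04_image_unitary: "rho04_image \<subseteq> unitary2"
proof -
  have "fib_sigma2 \<in> unitary2"
    by (simp add: fib_sigma2_eq unitary2_mult fib_F_unitary fib_sigma1_unitary)
  then have "rho04_generators \<subseteq> unitary2"
    using fib_sigma1_unitary
    by (simp add: rho04_generators_def unitary2_mult unitary2_matrix_inv unitary2_cadjoint)
  then show ?thesis
    unfolding rho04_image_def by (rule gen_group_subset_unitary2)
qed

lemma fib_sigma1_sq: "fib_sigma1 ** fib_sigma1 = mat2 (cis (8 * pi / 5)) 0 0 (cis (4 * pi / 5))"
  by (simp add: fib_sigma1_def mat2_eq_iff cis_mult)

lemma fib_sigma1_sq_eq_su2_rot:
  "fib_sigma1 ** fib_sigma1 = mat (cis (6 * pi / 5)) ** su2_rot (axis 1 1) (2 * pi / 5)"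
proof -
  have "Complex (cos t) (sin t) = cis t" "Complex (cos t) (- sin t) = cis (- t)" for t
    by (simp_all add: complex_eq_iff)
  then show ?thesis
    by (simp add: fib_sigma1_sq su2_rot_def qmat_def mat_eq_mat2 mat2_eq_iff cis_mult axis_def
        Complex_eq_0)
qed

definition fib_twist_product :: "complex^2^2" where
  "fib_twist_product = fib_sigma1 ** fib_sigma1 ** matrix_inv (fib_sigma2 ** fib_sigma2)"

lemma fib_twist_product_mem: "fib_twist_product \<in> rho04_image"
proof -
  have "fib_sigma1 ** fib_sigma1 \<in> rho04_generators" "fib_sigma2 ** fib_sigma2 \<in> rho04_generators"
    by (simp_all add: rho04_generators_def)
  then show ?thesis
    unfolding fib_twist_product_def rho04_image_def by (intro gen_group_mult gen_group_generator)
qed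

lemma fib_twist_product_eq:
  "fib_twist_product =
     fib_sigma1 ** fib_sigma1 ** (fib_F ** cadjoint (fib_sigma1 ** fib_sigma1) ** fib_F)"
proof -
  have "fib_sigma2 ** fib_sigma2 = fib_F ** (fib_sigma1 ** fib_sigma1) ** fib_F"
    by (simp add: fib_sigma2_eq matrix_mul_assoc fib_F_mult_self)
      (simp flip: matrix_mul_assoc add: fib_F_mult_self)
  moreover have "fib_sigma2 ** fib_sigma2 \<in> unitary2"
    by (simp add: fib_sigma2_eq unitary2_mult fib_F_unitary fib_sigma1_unitary)
  ultimately show ?thesis
    by (simp add: fib_twist_product_def unitary2_matrix_inv cadjoint_mult cadjoint_fib_F
        matrix_mul_assoc)
qed

lemma det_fib_twist_product: "det fib_twist_product = 1"
  by (simp add: fib_twist_product_eq fib_sigma1_sq det_mul det_fib_F cis_cnj cis_mult)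

lemma fib_twist_product_11:
  "fib_twist_product $ 1 $ 1 = Complex ((2 - sqrt 5) / 2) (fib_tau * sin (4 * pi / 5))"
proof -
  have "fib_twist_product $ 1 $ 1 = (1 - of_real fib_tau) + of_real fib_tau * cis (4 * pi / 5)"
    by (simp add: fib_twist_product_eq fib_sigma1_sq fib_F_def cis_cnj cis_mult fib_tau_sq_complex
        algebra_simps)
  also have "\<dots> = Complex ((2 - sqrt 5) / 2) (fib_tau * sin (4 * pi / 5))"
    by (simp add: complex_eq_iff cos_4pi_div_5 fib_tau_def) (simp add: field_simps)
  finally show ?thesis .
qed

lemma fib_twist_product_eq_su2_rot:
  obtains n a where "n \<bullet> n = 1" "2 * cos a = 2 - sqrt 5"
    "(n $ 1)\<^sup>2 = (5 - 2 * sqrt 5) / (4 * sqrt 5 - 5)" "fib_twist_product = su2_rot n a"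
proof -
  have "fib_twist_product \<in> unitary2"
    using fib_twist_product_mem rho04_image_unitary by blast
  then obtain x0 v where h: "fib_twist_product = qmat x0 v" and unit: "x0\<^sup>2 + v \<bullet> v = 1"
    using det_fib_twist_product by (rule su2_eq_qmat)
  have "Complex x0 (v $ 1) = Complex ((2 - sqrt 5) / 2) (fib_tau * sin (4 * pi / 5))"
    using fib_twist_product_11 by (simp add: h qmat_def)
  then have x0: "x0 = (2 - sqrt 5) / 2" and v1: "v $ 1 = fib_tau * sin (4 * pi / 5)"
    by simp_all
  have "sqrt 5 > (2::real)"
    by (rule real_less_rsqrt) simp
  then have x0_sq: "1 - x0\<^sup>2 = (4 * sqrt 5 - 5) / 4" and "x0\<^sup>2 < 1"
    by (simp_all add: x0 power2_eq_square field_simps)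
  have "(v $ 1)\<^sup>2 = fib_tau\<^sup>2 * (1 - (cos (4 * pi / 5))\<^sup>2)"
    by (simp add: v1 power_mult_distrib sin_squared_eq)
  also have "\<dots> = (5 - 2 * sqrt 5) / 4"
    by (simp add: cos_4pi_div_5 fib_tau_def power2_eq_square) (simp add: field_simps)
  finally have v1_sq: "(v $ 1)\<^sup>2 = (5 - 2 * sqrt 5) / 4" .
  have "((v /\<^sub>R sqrt (1 - x0\<^sup>2)) $ 1)\<^sup>2 = (v $ 1)\<^sup>2 / (1 - x0\<^sup>2)"
    using \<open>x0\<^sup>2 < 1\<close> by (simp add: power_mult_distrib power_inverse divide_inverse)
  also have "\<dots> = (5 - 2 * sqrt 5) / (4 * sqrt 5 - 5)"
    using \<open>sqrt 5 > 2\<close> unfolding v1_sq x0_sq by (simp add: field_simps)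
  finally have "((v /\<^sub>R sqrt (1 - x0\<^sup>2)) $ 1)\<^sup>2 = (5 - 2 * sqrt 5) / (4 * sqrt 5 - 5)" .
  moreover have "2 * cos (arccos x0) = 2 - sqrt 5"
    using \<open>x0\<^sup>2 < 1\<close> by (simp add: x0 abs_square_less_1 abs_less_iff)
  ultimately show ?thesis
    using unit_qmat_eq_su2_rot[OF unit \<open>x0\<^sup>2 < 1\<close>] h
    by (intro that[of "v /\<^sub>R sqrt (1 - x0\<^sup>2)" "arccos x0"]) simp_all
qed

text \<open>The left-hand side is the squared inner product of the axis of fib_twist_product with the
  axis of its conjugate by fib_sigma1^2 (see lemma6p3); it equals 5 / (4 sqrt 5 - 5)^2.\<close>

lemma fib_axes_inner_sq_le:
  "(cos (4 * pi / 5) + (1 - cos (4 * pi / 5)) * ((5 - 2 * sqrt 5) / (4 * sqrt 5 - 5)))\<^sup>2 \<le> 1 / 2"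
proof -
  define r where "r = sqrt (5::real)"
  have r2: "r * r = 5" by (simp add: r_def)
  have "2.2 < r"
    unfolding r_def by (rule real_less_rsqrt) (simp add: power2_eq_square)
  then have pos: "4 * r - 5 > 3.8" by simp
  have "cos (4 * pi / 5) + (1 - cos (4 * pi / 5)) * ((5 - 2 * r) / (4 * r - 5))
      = - r / (4 * r - 5)"
    using pos r2 by (simp add: cos_4pi_div_5 flip: r_def) (simp add: field_simps)
  moreover have "(- r / (4 * r - 5))\<^sup>2 \<le> 1 / 2"
  proof -
    have "3.8 * 3.8 \<le> (4 * r - 5) * (4 * r - 5)"
      using pos by (intro mult_mono) simp_all
    then show ?thesis
      using pos by (simp add: power_divide power2_eq_square r2 divide_le_eq)
  qed
  ultimately show ?thesis by (simp add: r_def)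
qed

lemma matrix_inv_scaled_su2_rot:
  assumes c: "cmod c = 1" and e: "e \<bullet> e = 1"
  shows "matrix_inv (mat c ** su2_rot e \<theta>) = mat (cnj c) ** su2_rot e (- \<theta>)"
  using unit_mult_cnj[OF c]
  by (intro matrix_inv_unique)
    (simp_all add: mat_mult_scalar_mult su2_rot_add[OF e] su2_rot_zero mult.commute[of "cnj c"])

lemma scaled_su2_rot_conj:
  assumes c: "cmod c = 1" and e: "e \<bullet> e = 1"
  shows "mat c ** su2_rot e \<theta> ** su2_rot n t ** matrix_inv (mat c ** su2_rot e \<theta>)
    = su2_rot (rodrigues e (2 * \<theta>) n) t"
proof -
  have "mat c ** su2_rot e \<theta> ** su2_rot n t ** matrix_inv (mat c ** su2_rot e \<theta>)
      = mat c ** (su2_rot e \<theta> ** su2_rot n t) ** (mat (cnj c) ** su2_rot e (- \<theta>))"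
    by (simp add: matrix_inv_scaled_su2_rot[OF c e] matrix_mul_assoc)
  also have "\<dots> = mat (c * cnj c) ** (su2_rot e \<theta> ** su2_rot n t ** su2_rot e (- \<theta>))"
    by (rule mat_mult_scalar_mult)
  also have "\<dots> = su2_rot (rodrigues e (2 * \<theta>) n) t"
    by (simp add: unit_mult_cnj[OF c] su2_rot_conj[OF e])
  finally show ?thesis .
qed

lemma fib_twist_product_conj_mem:
  assumes "fib_twist_product = su2_rot n a"
  shows "su2_rot (rodrigues (axis 1 1) (4 * pi / 5) n) a \<in> rho04_image"
proof -
  let ?s = "fib_sigma1 ** fib_sigma1"
  have "?s \<in> rho04_generators" by (simp add: rho04_generators_def)
  then have "?s \<in> rho04_image" "matrix_inv ?s \<in> rho04_image"
    unfolding rho04_image_def by (simp_all add: gen_group_generator)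
  then have "?s ** fib_twist_product ** matrix_inv ?s \<in> rho04_image"
    using fib_twist_product_mem unfolding rho04_image_def by (simp add: gen_group_mult)
  moreover have "(axis 1 1 :: real^3) \<bullet> axis 1 1 = 1" by (simp add: inner_axis_axis)
  ultimately show ?thesis
    using scaled_su2_rot_conj[of "cis (6 * pi / 5)" "axis 1 1" "2 * pi / 5" n a]
    by (simp add: assms fib_sigma1_sq_eq_su2_rot)
qed

theorem lemma6p3:
  shows "dense_in_PU2 rho04_image"
proof -
  obtain n a where n: "n \<bullet> n = 1" and cos_a: "2 * cos a = 2 - sqrt 5"
    and n1: "(n $ 1)\<^sup>2 = (5 - 2 * sqrt 5) / (4 * sqrt 5 - 5)"
    and twist: "fib_twist_product = su2_rot n a"
    by (rule fib_twist_product_eq_su2_rot)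
  define m where "m = rodrigues (axis 1 1) (4 * pi / 5) n"
  have e1: "(axis 1 1 :: real^3) \<bullet> axis 1 1 = 1" by (simp add: inner_axis_axis)
  have m: "m \<bullet> m = 1"
    using inner_rodrigues_self[OF e1] n by (simp add: m_def)
  have "n \<bullet> m = cos (4 * pi / 5) + (1 - cos (4 * pi / 5)) * (n $ 1)\<^sup>2"
    using inner_rodrigues[OF e1, of n "4 * pi / 5"] n by (simp add: m_def inner_axis')
  then have angle: "(n \<bullet> m)\<^sup>2 \<le> 1 / 2"
    using fib_axes_inner_sq_le by (simp add: n1)
  show ?thesis
  proof (rule dense_in_PU2_if_two_irrational_rotations[OF rho04_image_unitary _ _ n m angle])
    show "mat 1 \<in> rho04_image" by (simp add: rho04_image_def gen_one)
    show "g ** h \<in> rho04_image" if "g \<in> rho04_image" "h \<in> rho04_image" for g h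
      using that unfolding rho04_image_def by (rule gen_group_mult)
    show "su2_rot n a \<in> rho04_image" using fib_twist_product_mem by (simp add: twist)
    show "su2_rot m a \<in> rho04_image" using fib_twist_product_conj_mem[OF twist] by (simp add: m_def)
    show "a / (2 * pi) \<notin> \<rat>" using cos_a by (rule angle_not_rational_multiple_of_pi)
  qed
qed

end
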